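(* Let $I$ be a nonempty directed set and let $\{\Delta_i\}_{i\in I}$ be a family of theories in a signature $\sigma$ such that each $\Delta_i$ is consistent and complete. Then $\liminf_I \Delta_i$ is consistent and $\limsup_I \Delta_i$ is complete. Moreover, the following are equivalent: (1) $\limsup_I \Delta_i$ is consistent; (2) $\liminf_I \Delta_i$ is complete; (3) $\lim_I \Delta_i$ exists.
   Context: Fix a first-order signature $\sigma$ and let $\mathrm{Sent}(\sigma)$ be the set of first-order sentences over $\sigma$ (with equality). A theory is a set $\Delta\subseteq \mathrm{Sent}(\sigma)$ such that $\Delta\vdash\theta$ implies $\theta\in\Delta$. A set of sentences is consistent if no contradiction is derivable from it (equivalently, its set of logical consequences is not all of $\mathrm{Sent}(\sigma)$), and complete if for every $\theta\in\mathrm{Sent}(\sigma)$ at least one of $\theta$, $\neg\theta$ belongs to it. A directed set is a partially ordered set $I$ such that any two elements have a common upper bound. For a family $\{\Delta_i\}_{i\in I}$ of sets of sentences indexed by a directed set $I$: $\limsup_I \Delta_i=\{\theta\in\mathrm{Sent}(\sigma): \forall i\in I\ \exists j\ge i\ [\theta\in\Delta_j]\}$, $\liminf_I \Delta_i=\{\theta\in\mathrm{Sent}(\sigma): \exists i\in I\ \forall j\ge i\ [\theta\in\Delta_j]\}$. We say $\lim_I\Delta_i$ exists and equals $\Delta$ if $\limsup_I\Delta_i=\liminf_I\Delta_i=\Delta$. *)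

theory Defs
  imports Main
begin

text \<open>The signature sigma is given by the types 'f (function symbols) and 'p (relation
symbols); a symbol applied to a list of arguments of length n is an n-ary occurrence.\<close>

datatype 'f trm = Var nat | Fun 'f "'f trm list"

datatype ('f, 'p) fm =
    Bot
  | Eq "'f trm" "'f trm"
  | Pred 'p "'f trm list"
  | Imp "('f, 'p) fm" "('f, 'p) fm"
  | Forall "('f, 'p) fm"

definition Neg :: "('f, 'p) fm \<Rightarrow> ('f, 'p) fm" where
  "Neg \<phi> = Imp \<phi> Bot"

primrec liftt :: "nat \<Rightarrow> 'f trm \<Rightarrow> 'f trm" where
  "liftt k (Var i) = (if i < k then Var i else Var (Suc i))"
| "liftt k (Fun f ts) = Fun f (map (liftt k) ts)"

primrec liftf :: "nat \<Rightarrow> ('f, 'p) fm \<Rightarrow> ('f, 'p) fm" where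
  "liftf k Bot = Bot"
| "liftf k (Eq s t) = Eq (liftt k s) (liftt k t)"
| "liftf k (Pred p ts) = Pred p (map (liftt k) ts)"
| "liftf k (Imp a b) = Imp (liftf k a) (liftf k b)"
| "liftf k (Forall a) = Forall (liftf (Suc k) a)"

primrec substt :: "nat \<Rightarrow> 'f trm \<Rightarrow> 'f trm \<Rightarrow> 'f trm" where
  "substt k s (Var i) = (if i < k then Var i else if i = k then s else Var (i - 1))"
| "substt k s (Fun f ts) = Fun f (map (substt k s) ts)"

primrec substf :: "nat \<Rightarrow> 'f trm \<Rightarrow> ('f, 'p) fm \<Rightarrow> ('f, 'p) fm" where
  "substf k s Bot = Bot"
| "substf k s (Eq a b) = Eq (substt k s a) (substt k s b)"
| "substf k s (Pred p ts) = Pred p (map (substt k s) ts)"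
| "substf k s (Imp a b) = Imp (substf k s a) (substf k s b)"
| "substf k s (Forall a) = Forall (substf (Suc k) (liftt 0 s) a)"

primrec closedt :: "nat \<Rightarrow> 'f trm \<Rightarrow> bool" where
  "closedt k (Var i) = (i < k)"
| "closedt k (Fun f ts) = list_all (closedt k) ts"

primrec closedf :: "nat \<Rightarrow> ('f, 'p) fm \<Rightarrow> bool" where
  "closedf k Bot = True"
| "closedf k (Eq a b) = (closedt k a \<and> closedt k b)"
| "closedf k (Pred p ts) = (\<forall>t\<in>set ts. closedt k t)"
| "closedf k (Imp a b) = (closedf k a \<and> closedf k b)"
| "closedf k (Forall a) = closedf (Suc k) a"

definition Sent :: "('f, 'p) fm set" where
  "Sent = {\<phi>. closedf 0 \<phi>}"

inductive derivable :: "('f, 'p) fm set \<Rightarrow> ('f, 'p) fm \<Rightarrow> bool" (infix "\<turnstile>" 50)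
  for \<Gamma> :: "('f, 'p) fm set" where
  hyp: "\<phi> \<in> \<Gamma> \<Longrightarrow> \<Gamma> \<turnstile> \<phi>"
| ax1: "\<Gamma> \<turnstile> Imp a (Imp b a)"
| ax2: "\<Gamma> \<turnstile> Imp (Imp a (Imp b c)) (Imp (Imp a b) (Imp a c))"
| ax3: "\<Gamma> \<turnstile> Imp (Imp (Imp a Bot) Bot) a"
| ax_inst: "\<Gamma> \<turnstile> Imp (Forall a) (substf 0 t a)"
| ax_dist: "\<Gamma> \<turnstile> Imp (Forall (Imp (liftf 0 a) b)) (Imp a (Forall b))"
| ax_refl: "\<Gamma> \<turnstile> Eq t t"
| ax_leib: "\<Gamma> \<turnstile> Imp (Eq s t) (Imp (substf 0 s a) (substf 0 t a))"
| mp: "\<Gamma> \<turnstile> Imp a b \<Longrightarrow> \<Gamma> \<turnstile> a \<Longrightarrow> \<Gamma> \<turnstile> b"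
| gen: "\<forall>\<psi>\<in>\<Gamma>. closedf 0 \<psi> \<Longrightarrow> \<Gamma> \<turnstile> a \<Longrightarrow> \<Gamma> \<turnstile> Forall a"

definition is_theory :: "('f, 'p) fm set \<Rightarrow> bool" where
  "is_theory \<Delta> \<longleftrightarrow> \<Delta> \<subseteq> Sent \<and> (\<forall>\<theta>\<in>Sent. \<Delta> \<turnstile> \<theta> \<longrightarrow> \<theta> \<in> \<Delta>)"

definition consistent :: "('f, 'p) fm set \<Rightarrow> bool" where
  "consistent \<Delta> \<longleftrightarrow> \<not> (\<Delta> \<turnstile> Bot)"

definition complete :: "('f, 'p) fm set \<Rightarrow> bool" where
  "complete \<Delta> \<longleftrightarrow> (\<forall>\<theta>\<in>Sent. \<theta> \<in> \<Delta> \<or> Neg \<theta> \<in> \<Delta>)"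

definition directed :: "'i::order set \<Rightarrow> bool" where
  "directed I \<longleftrightarrow> (\<forall>i\<in>I. \<forall>j\<in>I. \<exists>k\<in>I. i \<le> k \<and> j \<le> k)"

definition lim_sup :: "'i::order set \<Rightarrow> ('i \<Rightarrow> ('f, 'p) fm set) \<Rightarrow> ('f, 'p) fm set" where
  "lim_sup I \<Delta> = {\<theta>\<in>Sent. \<forall>i\<in>I. \<exists>j\<in>I. i \<le> j \<and> \<theta> \<in> \<Delta> j}"

definition lim_inf :: "'i::order set \<Rightarrow> ('i \<Rightarrow> ('f, 'p) fm set) \<Rightarrow> ('f, 'p) fm set" where
  "lim_inf I \<Delta> = {\<theta>\<in>Sent. \<exists>i\<in>I. \<forall>j\<in>I. i \<le> j \<longrightarrow> \<theta> \<in> \<Delta> j}"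

definition lim_exists :: "'i::order set \<Rightarrow> ('i \<Rightarrow> ('f, 'p) fm set) \<Rightarrow> bool" where
  "lim_exists I \<Delta> \<longleftrightarrow> lim_sup I \<Delta> = lim_inf I \<Delta>"

end

theory Submission
  imports Defs
begin

text \<open>Because every \<open>\<Delta>\<^sub>i\<close> is complete, a sentence that is not eventually in
  \<open>\<Delta>\<^sub>i\<close> has its negation in cofinally many \<open>\<Delta>\<^sub>j\<close>: \<open>\<theta> \<notin> lim_inf\<close> forces
  \<open>Neg \<theta> \<in> lim_sup\<close>. Together with \<open>lim_inf \<subseteq> lim_sup\<close> this makes \<open>lim_sup\<close>
  complete, and it gives \<open>lim_sup \<subseteq> lim_inf\<close> once \<open>lim_sup\<close> is consistent. If instead
  \<open>lim_inf\<close> is complete, a sentence of \<open>lim_sup\<close> outside \<open>lim_inf\<close> would have its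
  negation eventually and itself cofinally, hence both in one consistent \<open>\<Delta>\<^sub>j\<close>.
  Consistency of \<open>lim_inf\<close> is compactness: a derivation of \<open>Bot\<close> uses finitely many
  sentences, which by directedness all lie in a single \<open>\<Delta>\<^sub>k\<close>.\<close>

text \<open>Rule \<open>gen\<close> applies only over sets of sentences, hence \<open>\<Gamma>' \<subseteq> Sent\<close>.\<close>

lemma derivable_mono:
  assumes "\<Gamma> \<turnstile> \<phi>" "\<Gamma> \<subseteq> \<Gamma>'" "\<Gamma>' \<subseteq> Sent"
  shows "\<Gamma>' \<turnstile> \<phi>"
  using assms
proof (induction rule: derivable.induct)
  case (hyp \<phi>) then show ?case by (blast intro: derivable.hyp)
next
  case (mp a b) then show ?case by (blast intro: derivable.mp)
next
  case (gen a) then show ?case by (auto simp: Sent_def intro!: derivable.gen)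
qed (auto intro: derivable.intros)

lemma derivable_finite_subset:
  assumes "\<Gamma> \<turnstile> \<phi>" "\<Gamma> \<subseteq> Sent"
  shows "\<exists>\<Gamma>\<^sub>0. finite \<Gamma>\<^sub>0 \<and> \<Gamma>\<^sub>0 \<subseteq> \<Gamma> \<and> \<Gamma>\<^sub>0 \<turnstile> \<phi>"
  using assms
proof (induction rule: derivable.induct)
  case (hyp \<phi>)
  then show ?case by (intro exI[of _ "{\<phi>}"]) (auto intro: derivable.hyp)
next
  case (mp a b)
  then obtain A B where A: "finite A" "A \<subseteq> \<Gamma>" "A \<turnstile> Imp a b"
    and B: "finite B" "B \<subseteq> \<Gamma>" "B \<turnstile> a" by blast
  have "A \<union> B \<turnstile> Imp a b" "A \<union> B \<turnstile> a"
    using A B mp.prems by (auto intro: derivable_mono)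
  then have "A \<union> B \<turnstile> b" by (rule derivable.mp)
  then show ?case using A B by blast
next
  case (gen a)
  then obtain A where A: "finite A" "A \<subseteq> \<Gamma>" "A \<turnstile> a" by blast
  then have "A \<turnstile> Forall a" using gen.hyps(1) by (blast intro: derivable.gen)
  then show ?case using A by blast
qed (rule exI[of _ "{}"], simp add: derivable.intros)+

lemma Neg_Sent: "\<theta> \<in> Sent \<Longrightarrow> Neg \<theta> \<in> Sent"
  by (simp add: Sent_def Neg_def)

lemma consistent_Neg_notin:
  assumes "consistent \<Gamma>" "\<theta> \<in> \<Gamma>"
  shows "Neg \<theta> \<notin> \<Gamma>"
proof
  assume "Neg \<theta> \<in> \<Gamma>"
  then have "\<Gamma> \<turnstile> Bot"
    using assms(2) by (metis Neg_def derivable.hyp derivable.mp)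
  with assms(1) show False unfolding consistent_def by blast
qed

lemma directed_finite_upper_bound:
  assumes "I \<noteq> {}" "directed I" "finite F" "F \<subseteq> I"
  shows "\<exists>k\<in>I. \<forall>i\<in>F. i \<le> k"
  using assms(3,4)
proof (induction F rule: finite_induct)
  case empty then show ?case using assms(1) by blast
next
  case (insert x F)
  then obtain k where k: "k \<in> I" "\<forall>i\<in>F. i \<le> k" by blast
  obtain m where "m \<in> I" "x \<le> m" "k \<le> m"
    using assms(2) insert.prems k unfolding directed_def by blast
  then show ?case using k by (auto intro: order_trans)
qed

lemma lim_inf_subset_lim_sup:
  assumes "directed I"
  shows "lim_inf I \<Delta> \<subseteq> lim_sup I \<Delta>"
  using assms unfolding lim_inf_def lim_sup_def directed_def by blast

lemma lim_inf_finite_subset: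
  assumes "I \<noteq> {}" "directed I" "finite G" "G \<subseteq> lim_inf I \<Delta>"
  shows "\<exists>k\<in>I. G \<subseteq> \<Delta> k"
proof -
  have "\<forall>\<theta>\<in>G. \<exists>i. i \<in> I \<and> (\<forall>j\<in>I. i \<le> j \<longrightarrow> \<theta> \<in> \<Delta> j)"
    using assms(4) unfolding lim_inf_def by blast
  then obtain start where start: "\<forall>\<theta>\<in>G. start \<theta> \<in> I \<and> (\<forall>j\<in>I. start \<theta> \<le> j \<longrightarrow> \<theta> \<in> \<Delta> j)"
    by (rule bchoice[THEN exE])
  obtain k where "k \<in> I" "\<forall>i\<in>start ` G. i \<le> k"
    using directed_finite_upper_bound[OF assms(1,2), of "start ` G"] assms(3) start by blast
  with start show ?thesis by blast
qed

lemma consistent_lim_inf: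
  assumes "I \<noteq> {}" "directed I"
    and "\<And>i. i \<in> I \<Longrightarrow> \<Delta> i \<subseteq> Sent"
    and "\<And>i. i \<in> I \<Longrightarrow> consistent (\<Delta> i)"
  shows "consistent (lim_inf I \<Delta>)"
  unfolding consistent_def
proof
  assume "lim_inf I \<Delta> \<turnstile> Bot"
  moreover have "lim_inf I \<Delta> \<subseteq> Sent" unfolding lim_inf_def by blast
  ultimately obtain G where G: "finite G" "G \<subseteq> lim_inf I \<Delta>" "G \<turnstile> Bot"
    by (blast dest: derivable_finite_subset)
  then obtain k where "k \<in> I" "G \<subseteq> \<Delta> k"
    using lim_inf_finite_subset[OF assms(1,2)] by blast
  then have "\<Delta> k \<turnstile> Bot" using G(3) assms(3)[OF \<open>k \<in> I\<close>] by (blast intro: derivable_mono)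
  with \<open>k \<in> I\<close> assms(4) show False unfolding consistent_def by blast
qed

lemma Neg_in_lim_sup_if_notin_lim_inf:
  assumes "\<And>i. i \<in> I \<Longrightarrow> complete (\<Delta> i)"
    and "\<theta> \<in> Sent" "\<theta> \<notin> lim_inf I \<Delta>"
  shows "Neg \<theta> \<in> lim_sup I \<Delta>"
proof -
  have Neg_in: "Neg \<theta> \<in> \<Delta> j" if "j \<in> I" "\<theta> \<notin> \<Delta> j" for j
    using assms(1)[OF that(1)] assms(2) that(2) unfolding complete_def by blast
  have "\<forall>i\<in>I. \<exists>j\<in>I. i \<le> j \<and> \<theta> \<notin> \<Delta> j"
    using assms(2,3) unfolding lim_inf_def by blast
  then have "\<forall>i\<in>I. \<exists>j\<in>I. i \<le> j \<and> Neg \<theta> \<in> \<Delta> j"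
    using Neg_in by blast
  then show ?thesis
    using Neg_Sent[OF assms(2)] unfolding lim_sup_def by blast
qed

lemma complete_lim_sup:
  fixes \<Delta> :: "'i::order \<Rightarrow> ('f, 'p) fm set"
  assumes "directed I" "\<And>i. i \<in> I \<Longrightarrow> complete (\<Delta> i)"
  shows "complete (lim_sup I \<Delta>)"
  unfolding complete_def
proof (intro ballI)
  fix \<theta> :: "('f, 'p) fm" assume \<theta>: "\<theta> \<in> Sent"
  show "\<theta> \<in> lim_sup I \<Delta> \<or> Neg \<theta> \<in> lim_sup I \<Delta>"
  proof (cases "\<theta> \<in> lim_inf I \<Delta>")
    case True
    with lim_inf_subset_lim_sup[OF assms(1)] have "\<theta> \<in> lim_sup I \<Delta>" ..
    then show ?thesis ..
  next
    case False
    with assms(2) \<theta> have "Neg \<theta> \<in> lim_sup I \<Delta>" by (rule Neg_in_lim_sup_if_notin_lim_inf)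
    then show ?thesis ..
  qed
qed

lemma lim_sup_subset_lim_inf_if_consistent:
  assumes "\<And>i. i \<in> I \<Longrightarrow> complete (\<Delta> i)" "consistent (lim_sup I \<Delta>)"
  shows "lim_sup I \<Delta> \<subseteq> lim_inf I \<Delta>"
proof
  fix \<theta> assume \<theta>: "\<theta> \<in> lim_sup I \<Delta>"
  with assms(2) have "Neg \<theta> \<notin> lim_sup I \<Delta>" by (rule consistent_Neg_notin)
  moreover have "\<theta> \<in> Sent" using \<theta> by (simp add: lim_sup_def)
  ultimately show "\<theta> \<in> lim_inf I \<Delta>"
    using Neg_in_lim_sup_if_notin_lim_inf[of I \<Delta>, OF assms(1)] by blast
qed

lemma lim_sup_subset_lim_inf_if_complete:
  assumes "\<And>i. i \<in> I \<Longrightarrow> consistent (\<Delta> i)" "complete (lim_inf I \<Delta>)"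
  shows "lim_sup I \<Delta> \<subseteq> lim_inf I \<Delta>"
proof
  fix \<theta> assume \<theta>: "\<theta> \<in> lim_sup I \<Delta>"
  show "\<theta> \<in> lim_inf I \<Delta>"
  proof (rule ccontr)
    assume "\<theta> \<notin> lim_inf I \<Delta>"
    moreover have "\<theta> \<in> Sent" using \<theta> by (simp add: lim_sup_def)
    ultimately have "Neg \<theta> \<in> lim_inf I \<Delta>" using assms(2) unfolding complete_def by blast
    then obtain i where i: "i \<in> I" "\<forall>j\<in>I. i \<le> j \<longrightarrow> Neg \<theta> \<in> \<Delta> j"
      unfolding lim_inf_def by blast
    then obtain j where "j \<in> I" "\<theta> \<in> \<Delta> j" "Neg \<theta> \<in> \<Delta> j"
      using \<theta> unfolding lim_sup_def by blast
    then show False using assms(1) consistent_Neg_notin by blast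
  qed
qed

theorem lemma2p2:
  fixes I :: "'i::order set" and \<Delta> :: "'i \<Rightarrow> ('f, 'p) fm set"
  assumes "I \<noteq> {}" and "directed I"
    and "\<And>i. i \<in> I \<Longrightarrow> is_theory (\<Delta> i)"
    and "\<And>i. i \<in> I \<Longrightarrow> consistent (\<Delta> i)"
    and "\<And>i. i \<in> I \<Longrightarrow> complete (\<Delta> i)"
  shows "consistent (lim_inf I \<Delta>) \<and> complete (lim_sup I \<Delta>)
    \<and> (consistent (lim_sup I \<Delta>) \<longleftrightarrow> complete (lim_inf I \<Delta>))
    \<and> (complete (lim_inf I \<Delta>) \<longleftrightarrow> lim_exists I \<Delta>)"
proof -
  have "\<Delta> i \<subseteq> Sent" if "i \<in> I" for i
    using assms(3)[OF that] unfolding is_theory_def by blast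
  then have inf_consistent: "consistent (lim_inf I \<Delta>)"
    using consistent_lim_inf[of I \<Delta>, OF assms(1,2)] assms(4) by blast
  have sup_complete: "complete (lim_sup I \<Delta>)"
    using complete_lim_sup[of I \<Delta>, OF assms(2,5)] .
  note inf_subset_sup = lim_inf_subset_lim_sup[OF assms(2)]
  have "lim_exists I \<Delta>" if "consistent (lim_sup I \<Delta>)"
    unfolding lim_exists_def
    using lim_sup_subset_lim_inf_if_consistent[of I \<Delta>, OF assms(5) that] inf_subset_sup
    by (rule subset_antisym)
  moreover have "lim_exists I \<Delta>" if "complete (lim_inf I \<Delta>)"
    unfolding lim_exists_def
    using lim_sup_subset_lim_inf_if_complete[of I \<Delta>, OF assms(4) that] inf_subset_sup
    by (rule subset_antisym)
  moreover have "consistent (lim_sup I \<Delta>) \<and> complete (lim_inf I \<Delta>)" if "lim_exists I \<Delta>"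
    using that inf_consistent sup_complete unfolding lim_exists_def by simp
  ultimately show ?thesis
    using inf_consistent sup_complete by blast
qed

end
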